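(* Let $G:\mathbb{R}^2\to\mathbb{R}$ and constants $L\ge c>0$ satisfy, for all $u,u_0,v\in\mathbb{R}$, $|G(u,v)-G(u_0,v)|\le L|u-u_0|$ and $|G(u,v)|\ge c\sqrt{u^2+v^2}$. Let $n,m\ge1$, fix $i\in\{1,\dots,n\}$, and let $f\in L^2((0,1)^n)$ (not a.e. constant) and $h\in L^2((0,1)^{n+m-1})$ be real-valued. Suppose $g\in L^2((0,1)^{n+m})$ satisfies $g(x,\xi)=G(f(x),h(x_{\sim i},\xi))$, with mean $g_0=\int g$, and that $c^2(\mathrm{Var}(f)+\mathrm{Var}(h))-g_0^2>0$. Then $$S^g_{T_{x_i}}\le\frac{2L^2\,\mathrm{Var}(f)}{c^2(\mathrm{Var}(f)+\mathrm{Var}(h))-g_0^2}\,S^f_{T_{x_i}}.$$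
   Context: All integrals are with respect to Lebesgue measure over unit cubes (inputs independent, uniform on $[0,1]$). $x_{\sim i}=(x_1,\dots,x_{i-1},x_{i+1},\dots,x_n)$. For $\varphi$, $\varphi_0=\int\varphi$ and $\mathrm{Var}(\varphi)=\int\varphi^2-\varphi_0^2$. The total Sobol index of $x_i$ for a square-integrable $\varphi$ of $(x,y)$ is $$S^\varphi_{T_{x_i}}=\frac{\int\varphi^2\,dx\,dy-\int\big(\int\varphi\,dx_i\big)^2dx_{\sim i}\,dy}{\mathrm{Var}(\varphi)}.$$ *)

theory Defs
  imports "HOL-Analysis.Analysis"
begin

definition unitI :: "real measure" where
  "unitI = restrict_space lborel {0..1}"

text \<open>Lebesgue measure on the unit cube indexed by a finite index set I
  (points are extensional functions I \<rightarrow> real).\<close>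
definition cube :: "nat set \<Rightarrow> (nat \<Rightarrow> real) measure" where
  "cube I = (\<Pi>\<^sub>M j\<in>I. unitI)"

definition variance :: "'a measure \<Rightarrow> ('a \<Rightarrow> real) \<Rightarrow> real" where
  "variance M \<phi> = (\<integral>z. (\<phi> z)\<^sup>2 \<partial>M) - (\<integral>z. \<phi> z \<partial>M)\<^sup>2"

text \<open>Total Sobol index of x_i for a function of x \<in> (0,1)^n (coordinates 1..n).\<close>
definition sobolT :: "nat \<Rightarrow> nat \<Rightarrow> ((nat \<Rightarrow> real) \<Rightarrow> real) \<Rightarrow> real" where
  "sobolT n i \<phi> =
     ((\<integral>x. (\<phi> x)\<^sup>2 \<partial>cube {1..n})
      - (\<integral>y. (\<integral>t. \<phi> (y(i := t)) \<partial>unitI)\<^sup>2 \<partial>cube ({1..n} - {i})))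
     / variance (cube {1..n}) \<phi>"

text \<open>Total Sobol index of x_i for a function of (x,\<xi>) \<in> (0,1)^n \<times> (0,1)^m.\<close>
definition sobolT2 :: "nat \<Rightarrow> nat \<Rightarrow> nat \<Rightarrow> ((nat \<Rightarrow> real) \<Rightarrow> (nat \<Rightarrow> real) \<Rightarrow> real) \<Rightarrow> real" where
  "sobolT2 n m i \<phi> =
     ((\<integral>z. (\<phi> (fst z) (snd z))\<^sup>2 \<partial>(cube {1..n} \<Otimes>\<^sub>M cube {1..m}))
      - (\<integral>z. (\<integral>t. \<phi> ((fst z)(i := t)) (snd z) \<partial>unitI)\<^sup>2
            \<partial>(cube ({1..n} - {i}) \<Otimes>\<^sub>M cube {1..m})))
     / variance (cube {1..n} \<Otimes>\<^sub>M cube {1..m}) (\<lambda>z. \<phi> (fst z) (snd z))"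

end

theory Submission
  imports Defs "HOL-Probability.Probability"
begin

text \<open>Fubini along the coordinate \<open>x\<^sub>i\<close> writes the numerator of a total Sobol index as the
  integral, over the remaining variables, of the variance in \<open>x\<^sub>i\<close> alone. Since \<open>h\<close> does not
  depend on \<open>x\<^sub>i\<close>, along each such line \<open>g\<close> is an \<open>L\<close>-Lipschitz function of \<open>f\<close>, and because
  the mean minimises the mean square deviation, the conditional variances (hence the
  numerators) compare with factor \<open>L\<^sup>2\<close>. The lower bound on \<open>|G|\<close> gives
  \<open>\<integral>g\<^sup>2 \<ge> c\<^sup>2 (\<integral>f\<^sup>2 + \<integral>h\<^sup>2)\<close>, so the variance of \<open>g\<close> is at least the denominator of the bound.\<close>

lemma prob_space_unitI: "prob_space unitI"
  unfolding unitI_def by (rule prob_space_restrict_space) auto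

lemma prob_space_cube: "prob_space (cube I)"
  unfolding cube_def by (rule prob_space_PiM) (rule prob_space_unitI)

lemma sigma_finite_cube: "sigma_finite_measure (cube I)"
  by (rule prob_space_imp_sigma_finite[OF prob_space_cube])

lemma space_unitI: "space unitI = {0..1}"
  unfolding unitI_def by simp

lemma space_cube: "space (cube I) = (\<Pi>\<^sub>E j\<in>I. {0..1})"
  unfolding cube_def by (simp add: space_PiM space_unitI)

lemma fun_upd_in_space_cube:
  "i \<in> I \<Longrightarrow> y \<in> space (cube (I - {i})) \<Longrightarrow> t \<in> space unitI \<Longrightarrow> y(i := t) \<in> space (cube I)"
  unfolding space_cube space_unitI by (auto simp: PiE_iff extensional_def)

lemma restrict_fun_upd_cube:
  "y \<in> space (cube J) \<Longrightarrow> i \<notin> J \<Longrightarrow> restrict (y(i := t)) J = y"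
  unfolding space_cube by (auto simp: PiE_iff extensional_def fun_eq_iff)

lemma measurable_cube_fun_upd:
  assumes "i \<in> I"
  shows "(\<lambda>(y, t). y(i := t)) \<in> measurable (cube (I - {i}) \<Otimes>\<^sub>M unitI) (cube I)"
proof -
  have "I = (I - {i}) \<union> {i}" using assms by auto
  then have "(\<lambda>w. (fst w)(i := snd w)) \<in> measurable (cube (I - {i}) \<Otimes>\<^sub>M unitI) (cube I)"
    unfolding cube_def by (rule measurable_fun_upd) (auto simp: cube_def[symmetric])
  then show ?thesis by (simp add: case_prod_beta')
qed

lemma measurable_cube_pair_fun_upd:
  assumes "i \<in> I"
  shows "(\<lambda>(z, t). ((fst z)(i := t), snd z))
           \<in> measurable ((cube (I - {i}) \<Otimes>\<^sub>M N) \<Otimes>\<^sub>M unitI) (cube I \<Otimes>\<^sub>M N)"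
proof -
  let ?PU = "(cube (I - {i}) \<Otimes>\<^sub>M N) \<Otimes>\<^sub>M unitI"
  have "(\<lambda>w. (fst (fst w), snd w)) \<in> measurable ?PU (cube (I - {i}) \<Otimes>\<^sub>M unitI)"
    by measurable
  from measurable_comp[OF this measurable_cube_fun_upd[OF assms]]
  have "(\<lambda>w. (fst (fst w))(i := snd w)) \<in> measurable ?PU (cube I)"
    by (simp add: comp_def)
  then show ?thesis by (simp add: case_prod_beta')
qed

lemma measurable_cube_pair_section:
  assumes "i \<in> I" and F: "F \<in> borel_measurable (cube I \<Otimes>\<^sub>M N)"
  shows "(\<lambda>(z, t). F ((fst z)(i := t), snd z))
           \<in> borel_measurable ((cube (I - {i}) \<Otimes>\<^sub>M N) \<Otimes>\<^sub>M unitI)"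
  using measurable_comp[OF measurable_cube_pair_fun_upd[OF assms(1)] F]
  by (simp add: comp_def case_prod_beta')

lemma nn_integral_cube_pair_split:
  assumes I: "finite I" "i \<in> I" and N: "sigma_finite_measure N"
    and F[measurable]: "F \<in> borel_measurable (cube I \<Otimes>\<^sub>M N)"
  shows "(\<integral>\<^sup>+z. F z \<partial>(cube I \<Otimes>\<^sub>M N))
       = (\<integral>\<^sup>+z. (\<integral>\<^sup>+t. F ((fst z)(i := t), snd z) \<partial>unitI) \<partial>(cube (I - {i}) \<Otimes>\<^sub>M N))"
proof -
  let ?J = "I - {i}"
  have ins: "insert i ?J = I" using I by auto
  interpret Q: pair_sigma_finite "cube I" N
    by (intro pair_sigma_finite.intro sigma_finite_cube N)
  interpret P: pair_sigma_finite "cube ?J" N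
    by (intro pair_sigma_finite.intro sigma_finite_cube N)
  interpret U: prob_space unitI by (rule prob_space_unitI)
  interpret PS: product_sigma_finite "\<lambda>_. unitI"
    by (simp add: product_sigma_finite_def U.sigma_finite_measure_axioms)
  have inner:
    "(\<lambda>z. \<integral>\<^sup>+t. F ((fst z)(i := t), snd z) \<partial>unitI) \<in> borel_measurable (cube ?J \<Otimes>\<^sub>M N)"
    using U.borel_measurable_nn_integral_fst[OF measurable_cube_pair_section[OF I(2) F]] by simp
  have "(\<integral>\<^sup>+z. F z \<partial>(cube I \<Otimes>\<^sub>M N)) = (\<integral>\<^sup>+\<xi>. (\<integral>\<^sup>+x. F (x, \<xi>) \<partial>cube I) \<partial>N)"
    by (rule Q.nn_integral_snd[symmetric]) (rule F)
  also have "\<dots> = (\<integral>\<^sup>+\<xi>. (\<integral>\<^sup>+y. (\<integral>\<^sup>+t. F (y(i := t), \<xi>) \<partial>unitI) \<partial>cube ?J) \<partial>N)"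
  proof (rule nn_integral_cong)
    fix \<xi> assume "\<xi> \<in> space N"
    then have "(\<lambda>x. F (x, \<xi>)) \<in> borel_measurable (Pi\<^sub>M (insert i ?J) (\<lambda>_. unitI))"
      unfolding ins cube_def[symmetric] by measurable
    then show "(\<integral>\<^sup>+x. F (x, \<xi>) \<partial>cube I)
        = (\<integral>\<^sup>+y. (\<integral>\<^sup>+t. F (y(i := t), \<xi>) \<partial>unitI) \<partial>cube ?J)"
      using PS.product_nn_integral_insert[of ?J i] I unfolding ins cube_def by simp
  qed
  also have "\<dots> = (\<integral>\<^sup>+z. (\<integral>\<^sup>+t. F ((fst z)(i := t), snd z) \<partial>unitI) \<partial>(cube ?J \<Otimes>\<^sub>M N))"
    using P.nn_integral_snd[OF inner] by simp
  finally show ?thesis .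
qed

lemma distr_cube_pair_fun_upd:
  assumes I: "finite I" "i \<in> I" and N: "sigma_finite_measure N"
  shows "distr ((cube (I - {i}) \<Otimes>\<^sub>M N) \<Otimes>\<^sub>M unitI) (cube I \<Otimes>\<^sub>M N)
           (\<lambda>(z, t). ((fst z)(i := t), snd z)) = cube I \<Otimes>\<^sub>M N"
    (is "distr ?PU ?Q ?\<Phi> = _")
proof (rule measure_eqI)
  interpret U: prob_space unitI by (rule prob_space_unitI)
  have \<Phi>: "?\<Phi> \<in> measurable ?PU ?Q" by (rule measurable_cube_pair_fun_upd[OF I(2)])
  fix A assume "A \<in> sets (distr ?PU ?Q ?\<Phi>)"
  then have A: "A \<in> sets ?Q" by simp
  have "emeasure (distr ?PU ?Q ?\<Phi>) A = (\<integral>\<^sup>+x. indicator A x \<partial>distr ?PU ?Q ?\<Phi>)"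
    using A by simp
  also have "\<dots> = (\<integral>\<^sup>+w. indicator A (?\<Phi> w) \<partial>?PU)"
    by (rule nn_integral_distr[OF \<Phi>]) (simp add: borel_measurable_indicator[OF A])
  also have "\<dots> = (\<integral>\<^sup>+z. (\<integral>\<^sup>+t. indicator A ((fst z)(i := t), snd z) \<partial>unitI)
                      \<partial>(cube (I - {i}) \<Otimes>\<^sub>M N))"
    using U.nn_integral_fst[OF measurable_comp[OF \<Phi> borel_measurable_indicator[OF A]]]
    by (simp add: comp_def)
  also have "\<dots> = emeasure ?Q A"
    using nn_integral_cube_pair_split[OF I N, of "indicator A"] A by simp
  finally show "emeasure (distr ?PU ?Q ?\<Phi>) A = emeasure ?Q A" .
qed simp

lemma
  fixes F :: "_ \<Rightarrow> _::{banach, second_countable_topology}"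
  assumes I: "finite I" "i \<in> I" and N: "sigma_finite_measure N"
    and F: "integrable (cube I \<Otimes>\<^sub>M N) F"
  shows AE_integrable_cube_pair_section:
      "AE z in cube (I - {i}) \<Otimes>\<^sub>M N. integrable unitI (\<lambda>t. F ((fst z)(i := t), snd z))"
    and integrable_cube_pair_section_integral:
      "integrable (cube (I - {i}) \<Otimes>\<^sub>M N) (\<lambda>z. \<integral>t. F ((fst z)(i := t), snd z) \<partial>unitI)"
    and integral_cube_pair_split:
      "integral\<^sup>L (cube I \<Otimes>\<^sub>M N) F
         = (\<integral>z. (\<integral>t. F ((fst z)(i := t), snd z) \<partial>unitI) \<partial>(cube (I - {i}) \<Otimes>\<^sub>M N))"
proof -
  interpret P: sigma_finite_measure "cube (I - {i}) \<Otimes>\<^sub>M N"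
    by (intro sigma_finite_pair_measure sigma_finite_cube N)
  interpret U: prob_space unitI by (rule prob_space_unitI)
  interpret PU: pair_sigma_finite "cube (I - {i}) \<Otimes>\<^sub>M N" unitI ..
  note \<Phi> = measurable_cube_pair_fun_upd[OF I(2), of N]
  note distr = distr_cube_pair_fun_upd[OF I N]
  have Fm: "F \<in> borel_measurable (cube I \<Otimes>\<^sub>M N)" using F by simp
  have "integrable ((cube (I - {i}) \<Otimes>\<^sub>M N) \<Otimes>\<^sub>M unitI) (\<lambda>w. F (case w of (z, t) \<Rightarrow> ((fst z)(i := t), snd z)))"
    using integrable_distr_eq[OF \<Phi> Fm, unfolded distr] F by simp
  then have F\<Phi>: "integrable ((cube (I - {i}) \<Otimes>\<^sub>M N) \<Otimes>\<^sub>M unitI) (\<lambda>(z, t). F ((fst z)(i := t), snd z))"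
    by (simp add: case_prod_beta')
  show "AE z in cube (I - {i}) \<Otimes>\<^sub>M N. integrable unitI (\<lambda>t. F ((fst z)(i := t), snd z))"
    by (rule PU.AE_integrable_fst[OF F\<Phi>])
  show "integrable (cube (I - {i}) \<Otimes>\<^sub>M N) (\<lambda>z. \<integral>t. F ((fst z)(i := t), snd z) \<partial>unitI)"
    by (rule PU.integrable_fst[OF F\<Phi>])
  have "integral\<^sup>L (cube I \<Otimes>\<^sub>M N) F
      = (\<integral>w. F (case w of (z, t) \<Rightarrow> ((fst z)(i := t), snd z)) \<partial>((cube (I - {i}) \<Otimes>\<^sub>M N) \<Otimes>\<^sub>M unitI))"
    using integral_distr[OF \<Phi> Fm, unfolded distr] .
  also have "\<dots> = (\<integral>z. (\<integral>t. F ((fst z)(i := t), snd z) \<partial>unitI) \<partial>(cube (I - {i}) \<Otimes>\<^sub>M N))"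
    using PU.integral_fst[OF F\<Phi>] by (simp add: case_prod_beta')
  finally show "integral\<^sup>L (cube I \<Otimes>\<^sub>M N) F
         = (\<integral>z. (\<integral>t. F ((fst z)(i := t), snd z) \<partial>unitI) \<partial>(cube (I - {i}) \<Otimes>\<^sub>M N))" .
qed

lemma distr_cube_pair_restrict:
  assumes "finite I" "J \<subseteq> I" "sigma_finite_measure N"
  shows "distr (cube I \<Otimes>\<^sub>M N) (cube J \<Otimes>\<^sub>M N) (\<lambda>z. (restrict (fst z) J, snd z))
           = cube J \<Otimes>\<^sub>M N"
proof -
  interpret U: prob_space unitI by (rule prob_space_unitI)
  interpret PP: product_prob_space "\<lambda>_. unitI" I
    by (simp add: product_prob_space_def product_prob_space_axioms_def product_sigma_finite_def
        prob_space_unitI U.sigma_finite_measure_axioms)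
  have "cube J = distr (cube I) (cube J) (\<lambda>x. restrict x J)"
    unfolding cube_def by (rule PP.distr_restrict[OF assms(2,1)])
  moreover have "(\<lambda>x. restrict x J) \<in> measurable (cube I) (cube J)"
    unfolding cube_def using assms(2) by (rule measurable_restrict_subset)
  ultimately show ?thesis
    using pair_measure_distr[of "\<lambda>x. restrict x J" "cube I" "cube J" "\<lambda>\<xi>. \<xi>" N N] assms(3)
    by (simp add: case_prod_beta')
qed

lemma
  fixes F :: "'a \<Rightarrow> 'c::{banach, second_countable_topology}"
  assumes N: "prob_space N" and F: "F \<in> borel_measurable M"
  shows integral_pair_measure_fst: "(\<integral>z. F (fst z) \<partial>(M \<Otimes>\<^sub>M N)) = integral\<^sup>L M F"
    and integrable_pair_measure_fst_iff:
      "integrable (M \<Otimes>\<^sub>M N) (\<lambda>z. F (fst z)) \<longleftrightarrow> integrable M F"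
  using integral_distr[OF measurable_fst[of M N] F] integrable_distr_eq[OF measurable_fst[of M N] F]
  by (simp_all add: prob_space.distr_pair_fst[OF N])

lemma integrable_square_deviation:
  fixes \<psi> :: "'a \<Rightarrow> real"
  assumes "prob_space M" "\<psi> \<in> borel_measurable M" "integrable M (\<lambda>t. (\<psi> t)\<^sup>2)"
  shows "integrable M (\<lambda>t. (\<psi> t - k)\<^sup>2)"
proof -
  interpret prob_space M by fact
  have "integrable M \<psi>" by (rule square_integrable_imp_integrable[OF assms(2,3)])
  then show ?thesis using assms(3) by (simp add: power2_diff)
qed

lemma integral_square_deviation:
  fixes \<psi> :: "'a \<Rightarrow> real"
  assumes P: "prob_space M" and \<psi>: "\<psi> \<in> borel_measurable M" "integrable M (\<lambda>t. (\<psi> t)\<^sup>2)"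
  shows "(\<integral>t. (\<psi> t - k)\<^sup>2 \<partial>M) = variance M \<psi> + ((\<integral>t. \<psi> t \<partial>M) - k)\<^sup>2"
proof -
  interpret prob_space M by (rule P)
  have int: "integrable M \<psi>" by (rule square_integrable_imp_integrable[OF \<psi>])
  have "(\<integral>t. (\<psi> t - k)\<^sup>2 \<partial>M) = (\<integral>t. (\<psi> t)\<^sup>2 - 2 * k * \<psi> t + k\<^sup>2 \<partial>M)"
    by (simp add: power2_diff algebra_simps)
  also have "\<dots> = (\<integral>t. (\<psi> t)\<^sup>2 \<partial>M) - 2 * k * (\<integral>t. \<psi> t \<partial>M) + k\<^sup>2"
    using int \<psi>(2) by (simp add: prob_space)
  finally show ?thesis by (simp add: variance_def power2_diff algebra_simps)
qed

lemma variance_le_integral_square_deviation: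
  fixes \<psi> :: "'a \<Rightarrow> real"
  assumes "prob_space M" "\<psi> \<in> borel_measurable M" "integrable M (\<lambda>t. (\<psi> t)\<^sup>2)"
  shows "variance M \<psi> \<le> (\<integral>t. (\<psi> t - k)\<^sup>2 \<partial>M)"
  using integral_square_deviation[OF assms, of k] by simp

lemma variance_nonneg:
  fixes \<psi> :: "'a \<Rightarrow> real"
  assumes "prob_space M" "\<psi> \<in> borel_measurable M" "integrable M (\<lambda>t. (\<psi> t)\<^sup>2)"
  shows "0 \<le> variance M \<psi>"
proof -
  have "0 \<le> (\<integral>t. (\<psi> t - (\<integral>s. \<psi> s \<partial>M))\<^sup>2 \<partial>M)" by (rule integral_nonneg_AE) simp
  then show ?thesis using integral_square_deviation[OF assms, of "\<integral>s. \<psi> s \<partial>M"] by simp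
qed

lemma variance_pos_if_not_AE_const:
  fixes \<psi> :: "'a \<Rightarrow> real"
  assumes "prob_space M" "\<psi> \<in> borel_measurable M" "integrable M (\<lambda>t. (\<psi> t)\<^sup>2)"
    and nonconst: "\<not> (\<exists>a. AE t in M. \<psi> t = a)"
  shows "0 < variance M \<psi>"
proof -
  let ?\<mu> = "\<integral>t. \<psi> t \<partial>M"
  have var: "variance M \<psi> = (\<integral>t. (\<psi> t - ?\<mu>)\<^sup>2 \<partial>M)"
    using integral_square_deviation[OF assms(1-3), of ?\<mu>] by simp
  have "variance M \<psi> \<noteq> 0"
  proof
    assume "variance M \<psi> = 0"
    then have "AE t in M. (\<psi> t - ?\<mu>)\<^sup>2 = 0"
      using integral_nonneg_eq_0_iff_AE[OF integrable_square_deviation[OF assms(1-3)]] var by simp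
    then have "AE t in M. \<psi> t = ?\<mu>" by eventually_elim simp
    with nonconst show False by blast
  qed
  with variance_nonneg[OF assms(1-3)] show ?thesis by simp
qed

text \<open>The constant \<open>k\<close> is arbitrary because the mean minimises the mean square deviation.\<close>
lemma variance_le_of_deviation_le:
  fixes \<phi> \<psi> :: "'a \<Rightarrow> real"
  assumes P: "prob_space M"
    and \<phi>: "\<phi> \<in> borel_measurable M" "integrable M (\<lambda>t. (\<phi> t)\<^sup>2)"
    and \<psi>: "\<psi> \<in> borel_measurable M" "integrable M (\<lambda>t. (\<psi> t)\<^sup>2)"
    and dev: "\<And>t. t \<in> space M \<Longrightarrow> \<bar>\<psi> t - k\<bar> \<le> L * \<bar>\<phi> t - (\<integral>s. \<phi> s \<partial>M)\<bar>"
  shows "variance M \<psi> \<le> L\<^sup>2 * variance M \<phi>"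
proof -
  let ?\<mu> = "\<integral>s. \<phi> s \<partial>M"
  have "variance M \<psi> \<le> (\<integral>t. (\<psi> t - k)\<^sup>2 \<partial>M)"
    by (rule variance_le_integral_square_deviation[OF P \<psi>])
  also have "\<dots> \<le> (\<integral>t. L\<^sup>2 * (\<phi> t - ?\<mu>)\<^sup>2 \<partial>M)"
  proof (rule integral_mono)
    fix t assume "t \<in> space M"
    then have "\<bar>\<psi> t - k\<bar>\<^sup>2 \<le> (L * \<bar>\<phi> t - ?\<mu>\<bar>)\<^sup>2"
      using dev by (intro power_mono) auto
    then show "(\<psi> t - k)\<^sup>2 \<le> L\<^sup>2 * (\<phi> t - ?\<mu>)\<^sup>2" by (simp add: power_mult_distrib)
  qed (use integrable_square_deviation[OF P \<phi>] integrable_square_deviation[OF P \<psi>] in auto)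
  also have "\<dots> = L\<^sup>2 * variance M \<phi>"
    using integral_square_deviation[OF P \<phi>, of ?\<mu>] by simp
  finally show ?thesis .
qed

definition sobol_numerator ::
    "nat set \<Rightarrow> nat \<Rightarrow> 'b measure \<Rightarrow> ((nat \<Rightarrow> real) \<Rightarrow> 'b \<Rightarrow> real) \<Rightarrow> real" where
  "sobol_numerator I i N \<phi> =
     (\<integral>z. (\<phi> (fst z) (snd z))\<^sup>2 \<partial>(cube I \<Otimes>\<^sub>M N))
     - (\<integral>z. (\<integral>t. \<phi> ((fst z)(i := t)) (snd z) \<partial>unitI)\<^sup>2 \<partial>(cube (I - {i}) \<Otimes>\<^sub>M N))"

lemma sobolT_eq_sobol_numerator:
  assumes N: "prob_space N" and i: "i \<in> {1..n}" and f: "f \<in> borel_measurable (cube {1..n})"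
  shows "sobolT n i f = sobol_numerator {1..n} i N (\<lambda>x _. f x) / variance (cube {1..n}) f"
proof -
  interpret U: prob_space unitI by (rule prob_space_unitI)
  have "(\<lambda>(y, t). f (y(i := t))) \<in> borel_measurable (cube ({1..n} - {i}) \<Otimes>\<^sub>M unitI)"
    using measurable_comp[OF measurable_cube_fun_upd[OF i] f]
    by (simp add: comp_def case_prod_beta')
  then have "(\<lambda>y. \<integral>t. f (y(i := t)) \<partial>unitI) \<in> borel_measurable (cube ({1..n} - {i}))"
    by (rule U.borel_measurable_lebesgue_integral)
  then have "(\<lambda>y. (\<integral>t. f (y(i := t)) \<partial>unitI)\<^sup>2) \<in> borel_measurable (cube ({1..n} - {i}))"
    by measurable
  note mean_sq = integral_pair_measure_fst[OF N this]
  have "(\<lambda>x. (f x)\<^sup>2) \<in> borel_measurable (cube {1..n})"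
    using f by measurable
  note sq = integral_pair_measure_fst[OF N this]
  show ?thesis
    unfolding sobolT_def sobol_numerator_def by (simp only: sq mean_sq)
qed

context
  fixes I :: "nat set" and i :: nat and N :: "'b measure"
    and \<phi> :: "(nat \<Rightarrow> real) \<Rightarrow> 'b \<Rightarrow> real"
  assumes I: "finite I" "i \<in> I" and N: "sigma_finite_measure N"
    and \<phi>: "(\<lambda>z. \<phi> (fst z) (snd z)) \<in> borel_measurable (cube I \<Otimes>\<^sub>M N)"
      "integrable (cube I \<Otimes>\<^sub>M N) (\<lambda>z. (\<phi> (fst z) (snd z))\<^sup>2)"
begin

lemma AE_cube_pair_section_L2:
  "AE z in cube (I - {i}) \<Otimes>\<^sub>M N.
     (\<lambda>t. \<phi> ((fst z)(i := t)) (snd z)) \<in> borel_measurable unitI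
     \<and> integrable unitI (\<lambda>t. (\<phi> ((fst z)(i := t)) (snd z))\<^sup>2)"
  using AE_integrable_cube_pair_section[OF I N \<phi>(2)] AE_space
proof eventually_elim
  case (elim z)
  have "(\<lambda>t. \<phi> ((fst z)(i := t)) (snd z)) \<in> borel_measurable unitI"
    using measurable_comp[OF measurable_Pair1'[OF elim(2)]
        measurable_cube_pair_section[OF I(2) \<phi>(1)]]
    by (simp add: comp_def)
  with elim(1) show ?case by simp
qed

lemma has_bochner_integral_sobol_numerator:
  "has_bochner_integral (cube (I - {i}) \<Otimes>\<^sub>M N)
     (\<lambda>z. variance unitI (\<lambda>t. \<phi> ((fst z)(i := t)) (snd z))) (sobol_numerator I i N \<phi>)"
proof -
  let ?P = "cube (I - {i}) \<Otimes>\<^sub>M N"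
  interpret U: prob_space unitI by (rule prob_space_unitI)
  have sq: "integrable ?P (\<lambda>z. \<integral>t. (\<phi> ((fst z)(i := t)) (snd z))\<^sup>2 \<partial>unitI)"
    using integrable_cube_pair_section_integral[OF I N \<phi>(2)] by simp
  have mean: "(\<lambda>z. \<integral>t. \<phi> ((fst z)(i := t)) (snd z) \<partial>unitI) \<in> borel_measurable ?P"
    using U.borel_measurable_lebesgue_integral[OF measurable_cube_pair_section[OF I(2) \<phi>(1)]]
    by simp
  have mean_sq: "integrable ?P (\<lambda>z. (\<integral>t. \<phi> ((fst z)(i := t)) (snd z) \<partial>unitI)\<^sup>2)"
  proof (rule Bochner_Integration.integrable_bound[OF sq])
    show "(\<lambda>z. (\<integral>t. \<phi> ((fst z)(i := t)) (snd z) \<partial>unitI)\<^sup>2) \<in> borel_measurable ?P"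
      using mean by measurable
    show "AE z in ?P. norm ((\<integral>t. \<phi> ((fst z)(i := t)) (snd z) \<partial>unitI)\<^sup>2)
                      \<le> norm (\<integral>t. (\<phi> ((fst z)(i := t)) (snd z))\<^sup>2 \<partial>unitI)"
      using AE_cube_pair_section_L2
      by eventually_elim
        (use variance_nonneg[OF prob_space_unitI] in \<open>auto simp: variance_def\<close>)
  qed
  have "has_bochner_integral ?P
          (\<lambda>z. (\<integral>t. (\<phi> ((fst z)(i := t)) (snd z))\<^sup>2 \<partial>unitI)
               - (\<integral>t. \<phi> ((fst z)(i := t)) (snd z) \<partial>unitI)\<^sup>2)
          ((\<integral>z. (\<integral>t. (\<phi> ((fst z)(i := t)) (snd z))\<^sup>2 \<partial>unitI) \<partial>?P)
           - (\<integral>z. (\<integral>t. \<phi> ((fst z)(i := t)) (snd z) \<partial>unitI)\<^sup>2 \<partial>?P))"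
    by (intro has_bochner_integral_diff has_bochner_integral_integrable sq mean_sq)
  moreover have "(\<integral>z. (\<phi> (fst z) (snd z))\<^sup>2 \<partial>(cube I \<Otimes>\<^sub>M N))
      = (\<integral>z. (\<integral>t. (\<phi> ((fst z)(i := t)) (snd z))\<^sup>2 \<partial>unitI) \<partial>?P)"
    using integral_cube_pair_split[OF I N \<phi>(2)] by simp
  ultimately show ?thesis
    unfolding sobol_numerator_def variance_def by (simp only:)
qed

lemma sobol_numerator_nonneg: "0 \<le> sobol_numerator I i N \<phi>"
proof -
  let ?var = "\<lambda>z. variance unitI (\<lambda>t. \<phi> ((fst z)(i := t)) (snd z))"
  have "AE z in cube (I - {i}) \<Otimes>\<^sub>M N. 0 \<le> ?var z"
    using AE_cube_pair_section_L2
    by eventually_elim (auto intro: variance_nonneg[OF prob_space_unitI])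
  then have "0 \<le> (\<integral>z. ?var z \<partial>(cube (I - {i}) \<Otimes>\<^sub>M N))"
    by (rule integral_nonneg_AE)
  then show ?thesis
    by (simp only: has_bochner_integral_integral_eq[OF has_bochner_integral_sobol_numerator])
qed

end

lemma sobol_numerator_le_Lipschitz:
  fixes G :: "real \<Rightarrow> real \<Rightarrow> real" and \<phi> \<psi> :: "(nat \<Rightarrow> real) \<Rightarrow> 'b \<Rightarrow> real"
  assumes I: "finite I" "i \<in> I" and N: "sigma_finite_measure N"
    and G_lip: "\<And>u u0 v. \<bar>G u v - G u0 v\<bar> \<le> L * \<bar>u - u0\<bar>"
    and \<phi>: "(\<lambda>z. \<phi> (fst z) (snd z)) \<in> borel_measurable (cube I \<Otimes>\<^sub>M N)"
      "integrable (cube I \<Otimes>\<^sub>M N) (\<lambda>z. (\<phi> (fst z) (snd z))\<^sup>2)"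
    and \<psi>: "(\<lambda>z. \<psi> (fst z) (snd z)) \<in> borel_measurable (cube I \<Otimes>\<^sub>M N)"
      "integrable (cube I \<Otimes>\<^sub>M N) (\<lambda>z. (\<psi> (fst z) (snd z))\<^sup>2)"
    and \<psi>_eq: "\<And>x \<xi>. x \<in> space (cube I) \<Longrightarrow> \<xi> \<in> space N \<Longrightarrow>
                 \<psi> x \<xi> = G (\<phi> x \<xi>) (H (restrict x (I - {i})) \<xi>)"
  shows "sobol_numerator I i N \<psi> \<le> L\<^sup>2 * sobol_numerator I i N \<phi>"
proof -
  let ?P = "cube (I - {i}) \<Otimes>\<^sub>M N"
  let ?var = "\<lambda>F z. variance unitI (\<lambda>t. F ((fst z)(i := t)) (snd z))"
  note int\<phi> = has_bochner_integral_sobol_numerator[OF I N \<phi>]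
  note int\<psi> = has_bochner_integral_sobol_numerator[OF I N \<psi>]
  have "AE z in ?P. ?var \<psi> z \<le> L\<^sup>2 * ?var \<phi> z"
    using AE_cube_pair_section_L2[OF I N \<phi>] AE_cube_pair_section_L2[OF I N \<psi>] AE_space
  proof eventually_elim
    case (elim z)
    have y: "fst z \<in> space (cube (I - {i}))" and \<xi>: "snd z \<in> space N"
      using elim(3) by (auto simp: space_pair_measure)
    let ?\<mu> = "\<integral>s. \<phi> ((fst z)(i := s)) (snd z) \<partial>unitI"
    have dev: "\<bar>\<psi> ((fst z)(i := t)) (snd z) - G ?\<mu> (H (fst z) (snd z))\<bar>
            \<le> L * \<bar>\<phi> ((fst z)(i := t)) (snd z) - ?\<mu>\<bar>" if "t \<in> space unitI" for t
    proof -
      have "restrict ((fst z)(i := t)) (I - {i}) = fst z"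
        by (rule restrict_fun_upd_cube[OF y]) simp
      then have "\<psi> ((fst z)(i := t)) (snd z)
          = G (\<phi> ((fst z)(i := t)) (snd z)) (H (fst z) (snd z))"
        using \<psi>_eq[OF fun_upd_in_space_cube[OF I(2) y that] \<xi>] by simp
      then show ?thesis by (simp add: G_lip)
    qed
    show ?case
      by (rule variance_le_of_deviation_le[OF prob_space_unitI _ _ _ _ dev])
        (use elim(1,2) in blast)+
  qed
  moreover have "integrable ?P (?var \<psi>)" by (rule integrable.intros[OF int\<psi>])
  ultimately have "(\<integral>z. ?var \<psi> z \<partial>?P) \<le> (\<integral>z. L\<^sup>2 * ?var \<phi> z \<partial>?P)"
    by (intro integral_mono_AE integrable_mult_right integrable.intros[OF int\<phi>])
  then show ?thesis
    using has_bochner_integral_integral_eq[OF int\<phi>] has_bochner_integral_integral_eq[OF int\<psi>]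
    by simp
qed

lemma variance_cube_pair_ge:
  fixes G :: "real \<Rightarrow> real \<Rightarrow> real" and \<phi> :: "(nat \<Rightarrow> real) \<Rightarrow> real"
    and H \<psi> :: "(nat \<Rightarrow> real) \<Rightarrow> 'b \<Rightarrow> real"
  assumes I: "finite I" "J \<subseteq> I" and N: "prob_space N" and c: "0 \<le> c"
    and G_low: "\<And>u v. c * sqrt (u\<^sup>2 + v\<^sup>2) \<le> \<bar>G u v\<bar>"
    and \<phi>: "\<phi> \<in> borel_measurable (cube I)" "integrable (cube I) (\<lambda>x. (\<phi> x)\<^sup>2)"
    and H: "(\<lambda>z. H (fst z) (snd z)) \<in> borel_measurable (cube J \<Otimes>\<^sub>M N)"
      "integrable (cube J \<Otimes>\<^sub>M N) (\<lambda>z. (H (fst z) (snd z))\<^sup>2)"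
    and \<psi>: "integrable (cube I \<Otimes>\<^sub>M N) (\<lambda>z. (\<psi> (fst z) (snd z))\<^sup>2)"
    and \<psi>_eq: "\<And>x \<xi>. x \<in> space (cube I) \<Longrightarrow> \<xi> \<in> space N \<Longrightarrow>
                 \<psi> x \<xi> = G (\<phi> x) (H (restrict x J) \<xi>)"
  shows "c\<^sup>2 * (variance (cube I) \<phi> + variance (cube J \<Otimes>\<^sub>M N) (\<lambda>z. H (fst z) (snd z)))
           - (\<integral>z. \<psi> (fst z) (snd z) \<partial>(cube I \<Otimes>\<^sub>M N))\<^sup>2
         \<le> variance (cube I \<Otimes>\<^sub>M N) (\<lambda>z. \<psi> (fst z) (snd z))"
proof -
  let ?Q = "cube I \<Otimes>\<^sub>M N"
  let ?Hr = "\<lambda>z. H (restrict (fst z) J) (snd z)"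
  have "(\<lambda>x. restrict x J) \<in> measurable (cube I) (cube J)"
    unfolding cube_def using I(2) by (rule measurable_restrict_subset)
  then have "(\<lambda>z. restrict (fst z) J) \<in> measurable ?Q (cube J)"
    by (rule measurable_compose[OF measurable_fst])
  then have R: "(\<lambda>z. (restrict (fst z) J, snd z)) \<in> measurable ?Q (cube J \<Otimes>\<^sub>M N)"
    by (rule measurable_Pair[OF _ measurable_snd])
  note distr = distr_cube_pair_restrict[OF I prob_space_imp_sigma_finite[OF N]]
  have H2: "(\<lambda>z. (H (fst z) (snd z))\<^sup>2) \<in> borel_measurable (cube J \<Otimes>\<^sub>M N)"
    using H(1) by measurable
  have Hr_int: "integrable ?Q (\<lambda>z. (?Hr z)\<^sup>2)"
    and Hr_eq: "(\<integral>z. (?Hr z)\<^sup>2 \<partial>?Q) = (\<integral>z. (H (fst z) (snd z))\<^sup>2 \<partial>(cube J \<Otimes>\<^sub>M N))"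
    using integrable_distr_eq[OF R H2, unfolded distr] integral_distr[OF R H2, unfolded distr] H(2)
    by simp_all
  have \<phi>2: "(\<lambda>x. (\<phi> x)\<^sup>2) \<in> borel_measurable (cube I)" using \<phi>(1) by measurable
  have \<phi>_int: "integrable ?Q (\<lambda>z. (\<phi> (fst z))\<^sup>2)"
    and \<phi>_eq: "(\<integral>z. (\<phi> (fst z))\<^sup>2 \<partial>?Q) = (\<integral>x. (\<phi> x)\<^sup>2 \<partial>cube I)"
    using integrable_pair_measure_fst_iff[OF N \<phi>2] integral_pair_measure_fst[OF N \<phi>2] \<phi>(2)
    by simp_all
  have pointwise: "c\<^sup>2 * (\<phi> (fst z))\<^sup>2 + c\<^sup>2 * (?Hr z)\<^sup>2 \<le> (\<psi> (fst z) (snd z))\<^sup>2"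
    if "z \<in> space ?Q" for z
  proof -
    let ?u = "\<phi> (fst z)" and ?v = "?Hr z"
    have "(c * sqrt (?u\<^sup>2 + ?v\<^sup>2))\<^sup>2 \<le> \<bar>G ?u ?v\<bar>\<^sup>2"
      using G_low c by (intro power_mono) auto
    moreover have "\<psi> (fst z) (snd z) = G ?u ?v"
      using \<psi>_eq[of "fst z" "snd z"] that by (auto simp: space_pair_measure)
    ultimately show ?thesis by (simp add: power_mult_distrib distrib_left)
  qed
  have "c\<^sup>2 * ((\<integral>x. (\<phi> x)\<^sup>2 \<partial>cube I) + (\<integral>z. (H (fst z) (snd z))\<^sup>2 \<partial>(cube J \<Otimes>\<^sub>M N)))
      = (\<integral>z. c\<^sup>2 * (\<phi> (fst z))\<^sup>2 + c\<^sup>2 * (?Hr z)\<^sup>2 \<partial>?Q)"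
    using \<phi>_int Hr_int by (simp add: \<phi>_eq Hr_eq distrib_left)
  also have "\<dots> \<le> (\<integral>z. (\<psi> (fst z) (snd z))\<^sup>2 \<partial>?Q)"
    using \<phi>_int Hr_int \<psi> pointwise by (intro integral_mono) auto
  finally have "c\<^sup>2 * ((\<integral>x. (\<phi> x)\<^sup>2 \<partial>cube I) + (\<integral>z. (H (fst z) (snd z))\<^sup>2 \<partial>(cube J \<Otimes>\<^sub>M N)))
      \<le> (\<integral>z. (\<psi> (fst z) (snd z))\<^sup>2 \<partial>?Q)" .
  moreover have "c\<^sup>2 * (variance (cube I) \<phi> + variance (cube J \<Otimes>\<^sub>M N) (\<lambda>z. H (fst z) (snd z)))
      \<le> c\<^sup>2 * ((\<integral>x. (\<phi> x)\<^sup>2 \<partial>cube I) + (\<integral>z. (H (fst z) (snd z))\<^sup>2 \<partial>(cube J \<Otimes>\<^sub>M N)))"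
    by (rule mult_left_mono) (simp_all add: variance_def add_mono)
  moreover have "variance ?Q (\<lambda>z. \<psi> (fst z) (snd z))
      = (\<integral>z. (\<psi> (fst z) (snd z))\<^sup>2 \<partial>?Q) - (\<integral>z. \<psi> (fst z) (snd z) \<partial>?Q)\<^sup>2"
    by (rule variance_def)
  ultimately show ?thesis by linarith
qed

theorem corollaryD5:
  fixes G :: "real \<Rightarrow> real \<Rightarrow> real" and L c :: real
    and n m i :: nat
    and f :: "(nat \<Rightarrow> real) \<Rightarrow> real"
    and h g :: "(nat \<Rightarrow> real) \<Rightarrow> (nat \<Rightarrow> real) \<Rightarrow> real"
  assumes Lc: "L \<ge> c" "c > 0"
    and G_lip: "\<And>u u0 v. \<bar>G u v - G u0 v\<bar> \<le> L * \<bar>u - u0\<bar>"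
    and G_low: "\<And>u v. \<bar>G u v\<bar> \<ge> c * sqrt (u\<^sup>2 + v\<^sup>2)"
    and nm: "n \<ge> 1" "m \<ge> 1"
    and i: "i \<in> {1..n}"
    and f_meas: "f \<in> borel_measurable (cube {1..n})"
    and f_L2: "integrable (cube {1..n}) (\<lambda>x. (f x)\<^sup>2)"
    and f_nonconst: "\<not> (\<exists>a. AE x in cube {1..n}. f x = a)"
    and h_meas: "(\<lambda>z. h (fst z) (snd z)) \<in> borel_measurable (cube ({1..n} - {i}) \<Otimes>\<^sub>M cube {1..m})"
    and h_L2: "integrable (cube ({1..n} - {i}) \<Otimes>\<^sub>M cube {1..m}) (\<lambda>z. (h (fst z) (snd z))\<^sup>2)"
    and g_meas: "(\<lambda>z. g (fst z) (snd z)) \<in> borel_measurable (cube {1..n} \<Otimes>\<^sub>M cube {1..m})"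
    and g_L2: "integrable (cube {1..n} \<Otimes>\<^sub>M cube {1..m}) (\<lambda>z. (g (fst z) (snd z))\<^sup>2)"
    and g_def: "\<And>x \<xi>. x \<in> space (cube {1..n}) \<Longrightarrow> \<xi> \<in> space (cube {1..m}) \<Longrightarrow>
                  g x \<xi> = G (f x) (h (restrict x ({1..n} - {i})) \<xi>)"
    and pos: "c\<^sup>2 * (variance (cube {1..n}) f
                + variance (cube ({1..n} - {i}) \<Otimes>\<^sub>M cube {1..m}) (\<lambda>z. h (fst z) (snd z)))
              - (\<integral>z. g (fst z) (snd z) \<partial>(cube {1..n} \<Otimes>\<^sub>M cube {1..m}))\<^sup>2 > 0"
  shows "sobolT2 n m i g \<le>
           2 * L\<^sup>2 * variance (cube {1..n}) f
           / (c\<^sup>2 * (variance (cube {1..n}) f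
                + variance (cube ({1..n} - {i}) \<Otimes>\<^sub>M cube {1..m}) (\<lambda>z. h (fst z) (snd z)))
              - (\<integral>z. g (fst z) (snd z) \<partial>(cube {1..n} \<Otimes>\<^sub>M cube {1..m}))\<^sup>2)
           * sobolT n i f"
proof -
  let ?Q = "cube {1..n} \<Otimes>\<^sub>M cube {1..m}" and ?P = "cube ({1..n} - {i}) \<Otimes>\<^sub>M cube {1..m}"
  let ?Vf = "variance (cube {1..n}) f" and ?Vg = "variance ?Q (\<lambda>z. g (fst z) (snd z))"
  let ?D = "c\<^sup>2 * (?Vf + variance ?P (\<lambda>z. h (fst z) (snd z))) - (\<integral>z. g (fst z) (snd z) \<partial>?Q)\<^sup>2"
  let ?Nf = "sobol_numerator {1..n} i (cube {1..m}) (\<lambda>x _. f x)"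
  let ?Ng = "sobol_numerator {1..n} i (cube {1..m}) g"
  have f2: "(\<lambda>x. (f x)\<^sup>2) \<in> borel_measurable (cube {1..n})" using f_meas by measurable
  have f_pair: "(\<lambda>z. f (fst z)) \<in> borel_measurable ?Q" "integrable ?Q (\<lambda>z. (f (fst z))\<^sup>2)"
    using f_meas f_L2 integrable_pair_measure_fst_iff[OF prob_space_cube f2] by simp_all
  note setting = finite_atLeastAtMost i sigma_finite_cube
  have rescale: "2 * (L\<^sup>2 * b / d) = 2 * L\<^sup>2 * v / d * (b / v)" if "0 < v" for b d v :: real
    using that by (simp add: field_simps)
  have Nf_nonneg: "0 \<le> ?Nf" by (rule sobol_numerator_nonneg[OF setting f_pair])
  have Ng_le: "?Ng \<le> L\<^sup>2 * ?Nf"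
    by (rule sobol_numerator_le_Lipschitz[where H = h, OF setting G_lip f_pair g_meas g_L2])
      (simp add: g_def)
  have D_le: "?D \<le> ?Vg"
    using Lc by (intro variance_cube_pair_ge[OF _ _ prob_space_cube _ G_low f_meas f_L2
        h_meas h_L2 g_L2 g_def]) auto
  have "sobolT2 n m i g = ?Ng / ?Vg"
    by (simp add: sobolT2_def sobol_numerator_def)
  also have "\<dots> \<le> L\<^sup>2 * ?Nf / ?D"
    using Ng_le D_le Nf_nonneg pos by (intro frac_le) auto
  also have "\<dots> \<le> 2 * (L\<^sup>2 * ?Nf / ?D)"
    using divide_nonneg_pos[OF mult_nonneg_nonneg[OF zero_le_power2[of L] Nf_nonneg] pos]
    by linarith
  also have "\<dots> = 2 * L\<^sup>2 * ?Vf / ?D * (?Nf / ?Vf)"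
    using variance_pos_if_not_AE_const[OF prob_space_cube f_meas f_L2 f_nonconst]
    by (rule rescale)
  also have "?Nf / ?Vf = sobolT n i f"
    by (rule sobolT_eq_sobol_numerator[OF prob_space_cube i f_meas, symmetric])
  finally show ?thesis .
qed

end
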